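(* Let $\Sigma=\{a,b\}$ with the discrete topology, and let $B$ send a topology $\tau$ on $\Sigma^*$ to the topology generated by the sets $UV$ with $U\subseteq\Sigma$ and $V\in\tau$. Then $B$ is a refinement function over $\Sigma^*$.
   Context: $UV=\{uv:u\in U,v\in V\}$ (concatenation). A topological space is Noetherian if every subset is compact. A refinement function over a set $X$ is a map $R$ from topologies on $X$ to topologies on $X$ that is monotone for inclusion ($\tau\subseteq\tau'\Rightarrow R(\tau)\subseteq R(\tau')$) and sends Noetherian topologies to Noetherian topologies. *)

theory Defs
  imports "HOL-Analysis.Analysis"
begin

text \<open>The alphabet Sigma = {a, b}; words are lists over it, so Sigma* = UNIV.\<close>
datatype sigma = a | b

definition conc :: "'c list set \<Rightarrow> 'c list set \<Rightarrow> 'c list set" where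
  "conc U V = {u @ v | u v. u \<in> U \<and> v \<in> V}"

definition letters :: "'c set \<Rightarrow> 'c list set" where
  "letters U = {[x] | x. x \<in> U}"

definition noetherian_space :: "'x topology \<Rightarrow> bool" where
  "noetherian_space T \<longleftrightarrow> (\<forall>S. S \<subseteq> topspace T \<longrightarrow> compactin T S)"

definition refinement_function :: "'x set \<Rightarrow> ('x topology \<Rightarrow> 'x topology) \<Rightarrow> bool" where
  "refinement_function X R \<longleftrightarrow>
     (\<forall>\<tau>. topspace \<tau> = X \<longrightarrow> topspace (R \<tau>) = X) \<and>
     (\<forall>\<tau> \<tau>'. topspace \<tau> = X \<and> topspace \<tau>' = X \<and> (\<forall>S. openin \<tau> S \<longrightarrow> openin \<tau>' S)
         \<longrightarrow> (\<forall>S. openin (R \<tau>) S \<longrightarrow> openin (R \<tau>') S)) \<and>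
     (\<forall>\<tau>. topspace \<tau> = X \<and> noetherian_space \<tau> \<longrightarrow> noetherian_space (R \<tau>))"

text \<open>B(tau): the topology on Sigma* generated by the sets UV, U a set of letters, V open in tau
  (the whole space Sigma* being open by convention of "topology on Sigma*").\<close>
definition B :: "sigma list topology \<Rightarrow> sigma list topology" where
  "B \<tau> = topology_generated_by
          (insert UNIV {conc (letters U) V | U V. U \<subseteq> (UNIV :: sigma set) \<and> openin \<tau> V})"

end

theory Submission
  imports Defs
begin

text \<open>For a letter \<open>c\<close> the map \<open>v \<mapsto> cv\<close> is continuous from \<open>\<tau>\<close> to \<open>B \<tau>\<close>, since the preimage
  of a generator \<open>UV\<close> is \<open>V\<close> or empty. Every set of words \<open>S\<close> is the union of \<open>S \<inter> {\<epsilon>}\<close> and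
  the images under these maps of the residuals \<open>{v. cv \<in> S}\<close>. If \<open>\<tau>\<close> is Noetherian, the
  residuals are compact, hence so are their images, and \<open>S\<close> is a finite union of compact sets.\<close>

definition prefix_refinement :: "'c list topology \<Rightarrow> 'c list topology" where
  "prefix_refinement \<tau> = topology_generated_by
     (insert UNIV {conc (letters U) V | U V. U \<subseteq> UNIV \<and> openin \<tau> V})"

lemma Cons_in_conc_letters: "c # v \<in> conc (letters U) V \<longleftrightarrow> c \<in> U \<and> v \<in> V"
proof
  assume "c # v \<in> conc (letters U) V"
  then show "c \<in> U \<and> v \<in> V"
    by (auto simp: conc_def letters_def)
next
  assume "c \<in> U \<and> v \<in> V"
  then have "c # v = [c] @ v" "[c] \<in> letters U" "v \<in> V"
    by (auto simp: letters_def)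
  then show "c # v \<in> conc (letters U) V"
    unfolding conc_def by blast
qed

lemma vimage_Cons_conc_letters: "(#) c -` conc (letters U) V = (if c \<in> U then V else {})"
  by (auto simp: Cons_in_conc_letters)

lemma topspace_prefix_refinement [simp]: "topspace (prefix_refinement \<tau>) = UNIV"
  by (simp add: prefix_refinement_def)

lemma openin_prefix_refinement_mono:
  assumes "\<And>V. openin \<tau> V \<Longrightarrow> openin \<tau>' V" and "openin (prefix_refinement \<tau>) X"
  shows "openin (prefix_refinement \<tau>') X"
  using openin_topology_generated_by[OF assms(2)[unfolded prefix_refinement_def]]
proof (rule generate_topology_on_coarsest[OF istopology_openin, rotated])
  fix S
  assume "S \<in> insert UNIV {conc (letters U) V | U V. U \<subseteq> UNIV \<and> openin \<tau> V}"
  then show "openin (prefix_refinement \<tau>') S"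
    unfolding prefix_refinement_def using assms(1)
    by (auto intro!: topology_generated_by_Basis)
qed

lemma continuous_map_Cons_prefix_refinement: "continuous_map \<tau> (prefix_refinement \<tau>) ((#) c)"
  unfolding prefix_refinement_def continuous_on_generated_topo_iff
  by (auto simp: vimage_Cons_conc_letters)

lemma compactin_prefix_refinement:
  fixes \<tau> :: "'c list topology"
  assumes "finite (UNIV :: 'c set)" and "topspace \<tau> = UNIV" and "noetherian_space \<tau>"
  shows "compactin (prefix_refinement \<tau>) S"
proof -
  have S_eq: "S = (S \<inter> {[]}) \<union> (\<Union>c. (#) c ` {v. c # v \<in> S})"
  proof (rule set_eqI)
    fix x
    show "x \<in> S \<longleftrightarrow> x \<in> (S \<inter> {[]}) \<union> (\<Union>c. (#) c ` {v. c # v \<in> S})"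
      by (cases x) auto
  qed
  have "compactin (prefix_refinement \<tau>) (S \<inter> {[]})"
    by (rule finite_imp_compactin) auto
  moreover have "compactin (prefix_refinement \<tau>) ((#) c ` {v. c # v \<in> S})" for c
  proof (rule image_compactin[OF _ continuous_map_Cons_prefix_refinement])
    show "compactin \<tau> {v. c # v \<in> S}"
      using assms(2,3) by (simp add: noetherian_space_def)
  qed
  then have "compactin (prefix_refinement \<tau>) (\<Union>c. (#) c ` {v. c # v \<in> S})"
    using assms(1) by (intro compactin_Union) auto
  ultimately show ?thesis
    by (subst S_eq) (rule compactin_Un)
qed

lemma noetherian_space_prefix_refinement:
  fixes \<tau> :: "'c list topology"
  assumes "finite (UNIV :: 'c set)" and "topspace \<tau> = UNIV" and "noetherian_space \<tau>"
  shows "noetherian_space (prefix_refinement \<tau>)"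
  using compactin_prefix_refinement[OF assms] by (simp add: noetherian_space_def)

lemma finite_UNIV_sigma: "finite (UNIV :: sigma set)"
proof -
  have "UNIV = {a, b}"
    using sigma.exhaust by blast
  then show ?thesis
    by (metis finite.emptyI finite.insertI)
qed

theorem mainTheorem8:
  shows "refinement_function (UNIV :: sigma list set) B"
proof -
  have B_eq: "B = prefix_refinement"
    by (simp add: fun_eq_iff B_def prefix_refinement_def)
  show ?thesis
    unfolding refinement_function_def B_eq
  proof (intro conjI allI impI)
    fix \<tau> \<tau>' :: "sigma list topology" and X
    assume "topspace \<tau> = UNIV \<and> topspace \<tau>' = UNIV \<and> (\<forall>S. openin \<tau> S \<longrightarrow> openin \<tau>' S)"
      and "openin (prefix_refinement \<tau>) X"
    then show "openin (prefix_refinement \<tau>') X"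
      by (blast intro: openin_prefix_refinement_mono)
  next
    fix \<tau> :: "sigma list topology"
    assume "topspace \<tau> = UNIV \<and> noetherian_space \<tau>"
    then show "noetherian_space (prefix_refinement \<tau>)"
      by (simp add: noetherian_space_prefix_refinement finite_UNIV_sigma)
  qed simp
qed

end
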